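(* Let $n>1$ and $P(x)=a_nx^n+a_{n-1}x^{n-1}+\cdots+a_1x$ with integer coefficients $a_i\ge 0$, $a_n\neq 0$, and $\gcd(a_n,\dots,a_1)=1$. Let $(a,b)\in\mathbb{N}^2$. If $\gcd_P(a,b)=1$, then $(a,b)$ is $\mathcal{F}(a_n,\dots,a_1)$-visible.
   Context: $\mathbb{N}$ denotes the positive integers. For $(a,b)\in\mathbb{N}^2$, $\gcd_P(a,b)=\max\{d\in\mathbb{N}: d\mid P(a),\ d\mid b\}$. The family $\mathcal{F}(a_n,\dots,a_1)=\{y=q(a_nx^n+\cdots+a_1x): q\in\mathbb{Q}^+\}$. A point $(r,s)\in\mathbb{N}^2$ is $\mathcal{F}(a_n,\dots,a_1)$-visible if there is $q\in\mathbb{Q}^+$ with $s=q(a_nr^n+\cdots+a_1r)$ and no other point of $\mathbb{N}^2$ lies on the curve $y=q(a_nx^n+\cdots+a_1x)$ between the origin and $(r,s)$. *)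

theory Defs
  imports "HOL-Computational_Algebra.Computational_Algebra"
begin

definition gcdP :: "int poly \<Rightarrow> nat \<Rightarrow> nat \<Rightarrow> nat" where
  "gcdP P a b = Max {d::nat. d > 0 \<and> int d dvd poly P (int a) \<and> d dvd b}"

text \<open>(r,s) in N^2 is F(P)-visible: some curve y = q P(x), q positive rational, passes
  through (r,s) and no other point of N^2 lies on it strictly between the origin and (r,s),
  i.e. with first coordinate 0 < x < r.\<close>
definition F_visible :: "int poly \<Rightarrow> nat \<Rightarrow> nat \<Rightarrow> bool" where
  "F_visible P r s \<longleftrightarrow> r > 0 \<and> s > 0 \<and>
     (\<exists>q::rat. q > 0 \<and> of_nat s = q * of_int (poly P (int r)) \<and>
        \<not> (\<exists>x y::nat. 0 < x \<and> x < r \<and> 0 < y \<and> of_nat y = q * of_int (poly P (int x))))"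

end

theory Submission
  imports Defs
begin

text \<open>Since the coefficients are nonnegative and the degree is positive, \<open>P\<close> is strictly
  increasing on the nonnegative integers, so \<open>0 < x < a\<close> gives \<open>P(x) < P(a)\<close>. A lattice point
  \<open>(x, y)\<close> on the curve through \<open>(a, b)\<close> satisfies \<open>y P(a) = b P(x)\<close>; as \<open>gcd\<^sub>P(a,b) = 1\<close> means
  that \<open>P(a)\<close> and \<open>b\<close> are coprime, \<open>P(a)\<close> divides the smaller positive number \<open>P(x)\<close>, which
  is impossible.\<close>

lemma poly_strict_mono_nonneg_coeffs:
  fixes p :: "'a::linordered_idom poly"
  assumes nonneg: "\<forall>i. coeff p i \<ge> 0" and deg: "degree p > 0"
    and "0 \<le> x" and "x < y"
  shows "poly p x < poly p y"
proof -
  have lead_pos: "lead_coeff p > 0"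
    using nonneg deg by (metis leading_coeff_0_iff order_le_less degree_0 less_irrefl)
  have "coeff p i * x ^ i \<le> coeff p i * y ^ i" for i
    using nonneg assms(3,4) by (intro mult_left_mono power_mono) auto
  moreover have "coeff p (degree p) * x ^ degree p < coeff p (degree p) * y ^ degree p"
    using lead_pos deg assms(3,4) by (intro mult_strict_left_mono power_strict_mono) auto
  ultimately have "(\<Sum>i\<le>degree p. coeff p i * x ^ i) < (\<Sum>i\<le>degree p. coeff p i * y ^ i)"
    by (intro sum_strict_mono_ex1) auto
  then show ?thesis
    by (simp add: poly_altdef)
qed

lemma gcdP_eq_gcd:
  assumes "b > 0"
  shows "gcdP P a b = nat (gcd (poly P (int a)) (int b))"
  unfolding gcdP_def
proof (rule Max_eqI)
  show "finite {d. 0 < d \<and> int d dvd poly P (int a) \<and> d dvd b}"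
    by (rule finite_subset[of _ "{..b}"]) (use assms in \<open>auto dest: dvd_imp_le\<close>)
  show "d \<le> nat (gcd (poly P (int a)) (int b))"
    if "d \<in> {d. 0 < d \<and> int d dvd poly P (int a) \<and> d dvd b}" for d
  proof -
    have "int d dvd gcd (poly P (int a)) (int b)"
      using that by simp
    then have "int d \<le> gcd (poly P (int a)) (int b)"
      by (rule zdvd_imp_le) (use assms in simp)
    then show ?thesis
      by simp
  qed
  show "nat (gcd (poly P (int a)) (int b)) \<in> {d. 0 < d \<and> int d dvd poly P (int a) \<and> d dvd b}"
    using assms by (simp add: nat_dvd_iff)
qed

lemma F_visible_if_coprime_and_below:
  assumes "a > 0" and "b > 0" and "poly P (int a) > 0"
    and coprime: "coprime (poly P (int a)) (int b)"
    and below: "\<forall>x. 0 < x \<and> x < a \<longrightarrow> poly P (int x) < poly P (int a)"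
  shows "F_visible P a b"
proof -
  define q :: rat where "q = of_nat b / of_int (poly P (int a))"
  have "q > 0" and on_curve_ab: "of_nat b = q * of_int (poly P (int a))"
    unfolding q_def using assms(2,3) by simp_all
  have no_point_before: "of_nat y \<noteq> q * of_int (poly P (int x))"
    if "0 < x" "x < a" "0 < y" for x y :: nat
  proof
    assume on_curve: "of_nat y = q * of_int (poly P (int x))"
    then have "of_int (int y * poly P (int a)) = (of_int (int b * poly P (int x)) :: rat)"
      using assms(3) unfolding q_def by (simp add: field_simps)
    then have cross: "int y * poly P (int a) = int b * poly P (int x)"
      by (simp only: of_int_eq_iff)
    have "poly P (int x) > 0"
    proof (rule ccontr)
      assume "\<not> poly P (int x) > 0"
      then have "q * of_int (poly P (int x)) \<le> 0"
        using \<open>q > 0\<close> by (simp add: mult_nonneg_nonpos)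
      then show False
        using on_curve \<open>0 < y\<close> by simp
    qed
    moreover have "poly P (int a) dvd poly P (int x)"
      using cross coprime by (metis dvd_triv_right coprime_dvd_mult_right_iff)
    ultimately have "poly P (int a) \<le> poly P (int x)"
      by (rule zdvd_imp_le[rotated])
    with below that show False
      by force
  qed
  show ?thesis
    unfolding F_visible_def using assms(1,2) \<open>q > 0\<close> on_curve_ab no_point_before by blast
qed

theorem lemma3p2:
  fixes P :: "int poly" and a b :: nat
  assumes "degree P > 1"
    and "coeff P 0 = 0"
    and "\<forall>i. coeff P i \<ge> 0"
    and "content P = 1"
    and "a > 0" and "b > 0"
    and "gcdP P a b = 1"
  shows "F_visible P a b"
proof (rule F_visible_if_coprime_and_below)
  have increasing: "poly P x < poly P y" if "0 \<le> x" "x < y" for x y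
    using poly_strict_mono_nonneg_coeffs[OF assms(3)] assms(1) that by simp
  show "poly P (int a) > 0"
    using increasing[of 0 "int a"] assms(2,5) by (simp add: poly_0_coeff_0)
  show "coprime (poly P (int a)) (int b)"
    using assms(6,7) by (simp add: gcdP_eq_gcd coprime_iff_gcd_eq_1)
  show "\<forall>x. 0 < x \<and> x < a \<longrightarrow> poly P (int x) < poly P (int a)"
    using increasing by simp
qed (use assms(5,6) in simp_all)

end
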